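(* Let $(\mathbf{x}^1,y_l^1,y_r^1),\dots,(\mathbf{x}^T,y_l^T,y_r^T)$ be a sequence of examples with $\mathbf{x}^t\in\mathbb{R}^d$ and integers $1\le y_l^t\le y_r^t\le K$, presented to the PA algorithm started from $\mathbf{w}^1=\mathbf{0}$, $\boldsymbol\theta^1=\mathbf{0}$. Let $\mathbf{v}^*=(\mathbf{u}^*,\mathbf{b}^* )$, $\mathbf{u}^*\in\mathbb{R}^d$, $\mathbf{b}^*\in\mathbb{R}^{K-1}$, be an ideal classifier: $\mathbf{u}^*\cdot\mathbf{x}^t-b_i^*\ge1$ for all $i\in\{1,\dots,y_l^t-1\}$ and all $t\in[T]$, and $\mathbf{u}^*\cdot\mathbf{x}^t-b_i^*\le-1$ for all $i\in\{y_r^t,\dots,K-1\}$ and all $t\in[T]$. Let $c=\min_{t\in[T]}(y_r^t-y_l^t)$ and $R^2=\max_{t\in[T]}\Vert\mathbf{x}^t\Vert^2$. Then $$\sum_{t=1}^T\sum_{i=1}^{K-1}(l_i^t)^2\le\Vert\mathbf{v}^*\Vert^2\left(1+R^2(K-c-1)\right),$$ where $\Vert\mathbf{v}^*\Vert^2=\Vert\mathbf{u}^*\Vert^2+\Vert\mathbf{b}^*\Vert^2$.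
   Context: PA algorithm: at trial $t$, $(\mathbf{w}^{t+1},\boldsymbol\theta^{t+1})$ is the unique minimizer of $\tfrac12\Vert\mathbf{w}-\mathbf{w}^t\Vert^2+\tfrac12\Vert\boldsymbol\theta-\boldsymbol\theta^t\Vert^2$ subject to $\mathbf{w}\cdot\mathbf{x}^t-\theta_i\ge1$ for $i=1,\dots,y_l^t-1$ and $\mathbf{w}\cdot\mathbf{x}^t-\theta_i\le-1$ for $i=y_r^t,\dots,K-1$. Losses: $l_i^t=\max(0,1+\theta_i^t-\mathbf{w}^t\cdot\mathbf{x}^t)$ for $1\le i\le y_l^t-1$, $l_i^t=\max(0,1+\mathbf{w}^t\cdot\mathbf{x}^t-\theta_i^t)$ for $y_r^t\le i\le K-1$, and $l_i^t=0$ for $y_l^t\le i\le y_r^t-1$. *)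

theory Defs
  imports "HOL-Analysis.Analysis"
begin

text \<open>Vectors in R^d are real^'d. Threshold vectors theta in R^(K-1) are functions
  nat => real of which only the coordinates 1..K-1 are used.\<close>

definition pa_feasible ::
  "nat \<Rightarrow> real^'d \<Rightarrow> nat \<Rightarrow> nat \<Rightarrow> real^'d \<Rightarrow> (nat \<Rightarrow> real) \<Rightarrow> bool" where
  "pa_feasible K x yl yr w \<theta> \<longleftrightarrow>
     (\<forall>i\<in>{1..<yl}. w \<bullet> x - \<theta> i \<ge> 1) \<and> (\<forall>i\<in>{yr..K-1}. w \<bullet> x - \<theta> i \<le> -1)"

definition pa_obj ::
  "nat \<Rightarrow> real^'d \<Rightarrow> (nat \<Rightarrow> real) \<Rightarrow> real^'d \<Rightarrow> (nat \<Rightarrow> real) \<Rightarrow> real" where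
  "pa_obj K w0 \<theta>0 w \<theta> = (1/2) * (norm (w - w0))^2 + (1/2) * (\<Sum>i=1..K-1. (\<theta> i - \<theta>0 i)^2)"

definition pa_step ::
  "nat \<Rightarrow> real^'d \<Rightarrow> nat \<Rightarrow> nat \<Rightarrow> real^'d \<Rightarrow> (nat \<Rightarrow> real) \<Rightarrow> real^'d \<Rightarrow> (nat \<Rightarrow> real) \<Rightarrow> bool" where
  "pa_step K x yl yr w0 \<theta>0 w \<theta> \<longleftrightarrow>
     pa_feasible K x yl yr w \<theta> \<and>
     (\<forall>w' \<theta>'. pa_feasible K x yl yr w' \<theta>' \<longrightarrow> pa_obj K w0 \<theta>0 w \<theta> \<le> pa_obj K w0 \<theta>0 w' \<theta>')"

definition pa_loss ::
  "nat \<Rightarrow> real^'d \<Rightarrow> nat \<Rightarrow> nat \<Rightarrow> real^'d \<Rightarrow> (nat \<Rightarrow> real) \<Rightarrow> nat \<Rightarrow> real" where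
  "pa_loss K x yl yr w \<theta> i =
     (if 1 \<le> i \<and> i < yl then max 0 (1 + \<theta> i - w \<bullet> x)
      else if yr \<le> i \<and> i \<le> K - 1 then max 0 (1 + w \<bullet> x - \<theta> i)
      else 0)"

end

theory Submission
  imports Defs
begin

text \<open>
  A PA update is the Euclidean projection of v_t = (w_t, \<theta>_t) onto the convex polyhedron of
  classifiers satisfying the constraints of trial t, and this polyhedron contains v*. The
  variational inequality of the projection gives
  ||v_(t+1) - v_t||^2 + ||v* - v_(t+1)||^2 <= ||v* - v_t||^2, which telescopes to a bound by
  ||v* - v_1||^2 = ||v*||^2. On the other hand, since v_(t+1) satisfies constraint i, each nonzero
  loss l_i^t is at most |a - c_i| with a = (w_(t+1) - w_t) . x_t and c_i = \<theta>_(t+1),i - \<theta>_t,i.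
  At most m = K - 1 - (yr_t - yl_t) <= K - c - 1 constraints are active, so Young's inequality
  with weight m ||x_t||^2 and Cauchy-Schwarz bound the squared losses of trial t by
  (1 + m ||x_t||^2) ||v_(t+1) - v_t||^2. No update is given for the last trial; there v* takes
  the place of v_(T+1).
\<close>

definition pa_inner :: "nat \<Rightarrow> real^'d \<Rightarrow> (nat \<Rightarrow> real) \<Rightarrow> real^'d \<Rightarrow> (nat \<Rightarrow> real) \<Rightarrow> real" where
  "pa_inner K w \<theta> w' \<theta>' = w \<bullet> w' + (\<Sum>i=1..K-1. \<theta> i * \<theta>' i)"

definition pa_sqnorm :: "nat \<Rightarrow> real^'d \<Rightarrow> (nat \<Rightarrow> real) \<Rightarrow> real" where
  "pa_sqnorm K w \<theta> = (norm w)^2 + (\<Sum>i=1..K-1. (\<theta> i)^2)"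

lemma pa_sqnorm_nonneg: "0 \<le> pa_sqnorm K w \<theta>"
  unfolding pa_sqnorm_def by (intro add_nonneg_nonneg sum_nonneg) auto

lemma pa_sqnorm_add_scaleR:
  "pa_sqnorm K (p + s *\<^sub>R q) (\<lambda>i. f i + s * g i)
     = pa_sqnorm K p f + 2 * s * pa_inner K p f q g + s^2 * pa_sqnorm K q g"
proof -
  have "(norm (p + s *\<^sub>R q))^2 = (norm p)^2 + 2 * s * (p \<bullet> q) + s^2 * (norm q)^2"
    unfolding power2_norm_eq_inner
    by (simp add: inner_add_left inner_add_right inner_commute power2_eq_square algebra_simps)
  moreover have "(\<Sum>i=1..K-1. (f i + s * g i)^2)
      = (\<Sum>i=1..K-1. (f i)^2) + 2 * s * (\<Sum>i=1..K-1. f i * g i) + s^2 * (\<Sum>i=1..K-1. (g i)^2)"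
    by (simp add: power2_eq_square algebra_simps sum.distrib sum_distrib_left)
  ultimately show ?thesis
    unfolding pa_sqnorm_def pa_inner_def by (simp add: algebra_simps)
qed

lemma pa_obj_eq_half_sqnorm:
  "pa_obj K w0 \<theta>0 w \<theta> = pa_sqnorm K (w - w0) (\<lambda>i. \<theta> i - \<theta>0 i) / 2"
  unfolding pa_obj_def pa_sqnorm_def by simp

lemma pa_feasible_segment:
  assumes "pa_feasible K x yl yr w \<theta>" "pa_feasible K x yl yr w' \<theta>'" "0 \<le> s" "s \<le> 1"
  shows "pa_feasible K x yl yr (w + s *\<^sub>R (w' - w)) (\<lambda>i. \<theta> i + s * (\<theta>' i - \<theta> i))"
proof -
  have margin: "(w + s *\<^sub>R (w' - w)) \<bullet> x - (\<theta> i + s * (\<theta>' i - \<theta> i))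
      = (1 - s) * (w \<bullet> x - \<theta> i) + s * (w' \<bullet> x - \<theta>' i)" for i
    by (simp add: inner_add_left inner_diff_left algebra_simps)
  have lower: "1 \<le> (1 - s) * m + s * m'" if "1 \<le> m" "1 \<le> m'" for m m' :: real
    using convex_bound_le[of "- m" "- 1" "- m'" "1 - s" s] that assms(3,4) by simp
  have upper: "(1 - s) * m + s * m' \<le> - 1" if "m \<le> - 1" "m' \<le> - 1" for m m' :: real
    using convex_bound_le[of m "- 1" m' "1 - s" s] that assms(3,4) by simp
  show ?thesis
    using assms(1,2) unfolding pa_feasible_def margin by (auto intro: lower upper)
qed

lemma nonneg_if_quadratic_nonneg_near_0:
  fixes a c :: real
  assumes "0 \<le> c" and quadratic: "\<And>s. 0 < s \<Longrightarrow> s \<le> 1 \<Longrightarrow> 0 \<le> 2 * s * a + s^2 * c"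
  shows "0 \<le> a"
proof (rule ccontr)
  assume "\<not> 0 \<le> a"
  define s where "s = min 1 (- a / (c + 1))"
  have s: "0 < s" "s \<le> 1"
    using \<open>\<not> 0 \<le> a\<close> \<open>0 \<le> c\<close> unfolding s_def by (auto simp: field_simps)
  have "s * c \<le> s * (c + 1)"
    using s by simp
  also have "\<dots> \<le> - a"
    using \<open>0 \<le> c\<close> pos_le_divide_eq[of "c + 1" s "- a"] unfolding s_def by simp
  finally have "s * c \<le> - a" .
  have "0 \<le> s * (2 * a + s * c)"
    using quadratic[OF s] by (simp add: power2_eq_square algebra_simps)
  then have "0 \<le> 2 * a + s * c"
    using s by (simp add: zero_le_mult_iff)
  with \<open>s * c \<le> - a\<close> \<open>\<not> 0 \<le> a\<close> show False
    by linarith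
qed

lemma pa_step_variational_ineq:
  assumes step: "pa_step K x yl yr w0 \<theta>0 w1 \<theta>1" and feas: "pa_feasible K x yl yr u b"
  shows "0 \<le> pa_inner K (w1 - w0) (\<lambda>i. \<theta>1 i - \<theta>0 i) (u - w1) (\<lambda>i. b i - \<theta>1 i)"
proof (rule nonneg_if_quadratic_nonneg_near_0[OF pa_sqnorm_nonneg])
  fix s :: real
  assume "0 < s" "s \<le> 1"
  then have "pa_feasible K x yl yr (w1 + s *\<^sub>R (u - w1)) (\<lambda>i. \<theta>1 i + s * (b i - \<theta>1 i))"
    using step feas unfolding pa_step_def by (intro pa_feasible_segment) auto
  then have "pa_obj K w0 \<theta>0 w1 \<theta>1
      \<le> pa_obj K w0 \<theta>0 (w1 + s *\<^sub>R (u - w1)) (\<lambda>i. \<theta>1 i + s * (b i - \<theta>1 i))"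
    using step unfolding pa_step_def by blast
  also have "\<dots> = pa_sqnorm K ((w1 - w0) + s *\<^sub>R (u - w1))
                     (\<lambda>i. (\<theta>1 i - \<theta>0 i) + s * (b i - \<theta>1 i)) / 2"
    unfolding pa_obj_eq_half_sqnorm by (simp add: algebra_simps)
  finally show "0 \<le> 2 * s * pa_inner K (w1 - w0) (\<lambda>i. \<theta>1 i - \<theta>0 i) (u - w1) (\<lambda>i. b i - \<theta>1 i)
                    + s^2 * pa_sqnorm K (u - w1) (\<lambda>i. b i - \<theta>1 i)"
    unfolding pa_sqnorm_add_scaleR pa_obj_eq_half_sqnorm by simp
qed

lemma pa_step_sqnorm_decrease:
  assumes "pa_step K x yl yr w0 \<theta>0 w1 \<theta>1" "pa_feasible K x yl yr u b"
  shows "pa_sqnorm K (w1 - w0) (\<lambda>i. \<theta>1 i - \<theta>0 i) + pa_sqnorm K (u - w1) (\<lambda>i. b i - \<theta>1 i)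
           \<le> pa_sqnorm K (u - w0) (\<lambda>i. b i - \<theta>0 i)"
proof -
  have "pa_sqnorm K (u - w0) (\<lambda>i. b i - \<theta>0 i)
      = pa_sqnorm K ((w1 - w0) + 1 *\<^sub>R (u - w1)) (\<lambda>i. (\<theta>1 i - \<theta>0 i) + 1 * (b i - \<theta>1 i))"
    by simp
  then show ?thesis
    using pa_step_variational_ineq[OF assms] unfolding pa_sqnorm_add_scaleR by simp
qed

lemma pa_loss_nonneg: "0 \<le> pa_loss K x yl yr w \<theta> i"
  unfolding pa_loss_def by simp

lemma pa_loss_eq_0: "i \<notin> {1..<yl} \<union> {yr..K-1} \<Longrightarrow> pa_loss K x yl yr w \<theta> i = 0"
  unfolding pa_loss_def by auto

lemma pa_loss_le_margin_change:
  assumes "pa_feasible K x yl yr w' \<theta>'"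
  shows "pa_loss K x yl yr w \<theta> i \<le> \<bar>(w' \<bullet> x - \<theta>' i) - (w \<bullet> x - \<theta> i)\<bar>"
proof (cases "i \<in> {1..<yl}")
  case True
  then have "1 \<le> w' \<bullet> x - \<theta>' i"
    using assms unfolding pa_feasible_def by blast
  with True show ?thesis
    unfolding pa_loss_def by auto
next
  case False
  show ?thesis
  proof (cases "i \<in> {yr..K-1}")
    case True
    then have "w' \<bullet> x - \<theta>' i \<le> - 1"
      using assms unfolding pa_feasible_def by blast
    with True False show ?thesis
      unfolding pa_loss_def by auto
  qed (use False in \<open>simp add: pa_loss_eq_0\<close>)
qed

text \<open>Young's inequality with weight \<open>k = card S * r\<close>, i.e.
  \<open>k (a - c)\<^sup>2 + (a + k c)\<^sup>2 = (k + 1) a\<^sup>2 + k (k + 1) c\<^sup>2\<close>.\<close>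
lemma sum_power2_diff_le:
  fixes a r A :: real and c :: "'a \<Rightarrow> real"
  assumes "finite S" and a: "a^2 \<le> r * A" and "0 \<le> r" "0 \<le> A"
  shows "(\<Sum>i\<in>S. (a - c i)^2) \<le> (1 + card S * r) * (A + (\<Sum>i\<in>S. (c i)^2))"
proof (cases "card S * r = 0")
  case True
  show ?thesis
  proof (cases "S = {}")
    case True
    then show ?thesis
      using \<open>0 \<le> A\<close> by simp
  next
    case False
    then have "r = 0"
      using \<open>card S * r = 0\<close> \<open>finite S\<close> by simp
    then have "a = 0"
      using a by simp
    then show ?thesis
      using \<open>r = 0\<close> \<open>0 \<le> A\<close> by simp
  qed
next
  case False
  define k where "k = card S * r"
  have "0 < k"
    using False \<open>0 \<le> r\<close> unfolding k_def by (metis of_nat_0_le_iff zero_le_mult_iff order_le_neq_trans)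
  have young: "k * (a - c i)^2 \<le> (k + 1) * a^2 + k * (1 + k) * (c i)^2" for i
  proof -
    have "0 \<le> (a + k * c i)^2" by simp
    then show ?thesis by (simp add: power2_eq_square algebra_simps)
  qed
  have "k * (\<Sum>i\<in>S. (a - c i)^2) \<le> (\<Sum>i\<in>S. (k + 1) * a^2 + k * (1 + k) * (c i)^2)"
    unfolding sum_distrib_left by (intro sum_mono young)
  also have "\<dots> = card S * ((k + 1) * a^2) + k * (1 + k) * (\<Sum>i\<in>S. (c i)^2)"
    by (simp add: sum.distrib sum_distrib_left)
  also have "\<dots> \<le> card S * ((k + 1) * (r * A)) + k * (1 + k) * (\<Sum>i\<in>S. (c i)^2)"
    using a \<open>0 < k\<close> by (intro add_right_mono mult_left_mono) auto
  also have "\<dots> = k * ((1 + k) * (A + (\<Sum>i\<in>S. (c i)^2)))"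
    unfolding k_def by (simp add: algebra_simps)
  finally show ?thesis
    using \<open>0 < k\<close> mult_le_cancel_left_pos unfolding k_def by blast
qed

lemma pa_loss_sum_le:
  assumes feas: "pa_feasible K x yl yr w' \<theta>'" and "1 \<le> yl" "yl \<le> yr" "yr \<le> K"
  shows "(\<Sum>i=1..K-1. (pa_loss K x yl yr w \<theta> i)^2)
     \<le> (1 + real (K - 1 - (yr - yl)) * (norm x)^2) * pa_sqnorm K (w' - w) (\<lambda>i. \<theta>' i - \<theta> i)"
proof -
  define S where "S = {1..<yl} \<union> {yr..K-1}"
  define a where "a = (w' - w) \<bullet> x"
  define c where "c i = \<theta>' i - \<theta> i" for i
  have "finite S" and "S \<subseteq> {1..K-1}"
    using assms(2-4) unfolding S_def by auto
  have "card S = K - 1 - (yr - yl)"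
    unfolding S_def using assms(2-4) by (subst card_Un_disjoint) auto
  have "(\<Sum>i=1..K-1. (pa_loss K x yl yr w \<theta> i)^2) = (\<Sum>i\<in>S. (pa_loss K x yl yr w \<theta> i)^2)"
    using \<open>S \<subseteq> {1..K-1}\<close> by (intro sum.mono_neutral_right) (auto intro!: pa_loss_eq_0 simp: S_def)
  also have "\<dots> \<le> (\<Sum>i\<in>S. (a - c i)^2)"
  proof (intro sum_mono)
    fix i
    have "(w' \<bullet> x - \<theta>' i) - (w \<bullet> x - \<theta> i) = a - c i"
      unfolding a_def c_def by (simp add: inner_diff_left)
    then have "pa_loss K x yl yr w \<theta> i \<le> \<bar>a - c i\<bar>"
      using pa_loss_le_margin_change[OF feas] by metis
    then show "(pa_loss K x yl yr w \<theta> i)^2 \<le> (a - c i)^2"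
      using pa_loss_nonneg power_mono by (metis power2_abs)
  qed
  also have "\<dots> \<le> (1 + card S * (norm x)^2) * ((norm (w' - w))^2 + (\<Sum>i\<in>S. (c i)^2))"
  proof (rule sum_power2_diff_le[OF \<open>finite S\<close>])
    show "a^2 \<le> (norm x)^2 * (norm (w' - w))^2"
      using Cauchy_Schwarz_ineq[of "w' - w" x] unfolding a_def power2_norm_eq_inner
      by (simp add: mult.commute)
  qed auto
  also have "\<dots> \<le> (1 + card S * (norm x)^2) * pa_sqnorm K (w' - w) (\<lambda>i. \<theta>' i - \<theta> i)"
    using \<open>S \<subseteq> {1..K-1}\<close> unfolding pa_sqnorm_def c_def
    by (intro mult_left_mono add_left_mono sum_mono2) auto
  finally show ?thesis
    using \<open>card S = K - 1 - (yr - yl)\<close> by simp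
qed

lemma pa_cumulative_sq_loss_le:
  assumes "1 \<le> T"
    and labels: "\<And>t. t \<in> {1..T} \<Longrightarrow> 1 \<le> yl t \<and> yl t \<le> yr t \<and> yr t \<le> K"
    and pa: "\<And>t. t \<in> {1..<T} \<Longrightarrow>
               pa_step K (x t) (yl t) (yr t) (w t) (\<theta> t) (w (Suc t)) (\<theta> (Suc t))"
    and feas: "\<And>t. t \<in> {1..T} \<Longrightarrow> pa_feasible K (x t) (yl t) (yr t) u b"
    and C: "\<And>t. t \<in> {1..T} \<Longrightarrow> 1 + real (K - 1 - (yr t - yl t)) * (norm (x t))^2 \<le> C"
  shows "(\<Sum>t=1..T. \<Sum>i=1..K-1. (pa_loss K (x t) (yl t) (yr t) (w t) (\<theta> t) i)^2)
           \<le> C * pa_sqnorm K (u - w 1) (\<lambda>i. b i - \<theta> 1 i)"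
proof -
  define L where "L t = (\<Sum>i=1..K-1. (pa_loss K (x t) (yl t) (yr t) (w t) (\<theta> t) i)^2)" for t
  define E where "E t = pa_sqnorm K (u - w t) (\<lambda>i. b i - \<theta> t i)" for t
  have loss_le: "L t \<le> C * pa_sqnorm K (w' - w t) (\<lambda>i. \<theta>' i - \<theta> t i)"
    if "t \<in> {1..T}" "pa_feasible K (x t) (yl t) (yr t) w' \<theta>'" for t w' \<theta>'
  proof -
    have "L t \<le> (1 + real (K - 1 - (yr t - yl t)) * (norm (x t))^2)
                  * pa_sqnorm K (w' - w t) (\<lambda>i. \<theta>' i - \<theta> t i)"
      unfolding L_def using pa_loss_sum_le that(2) labels[OF that(1)] by blast
    also have "\<dots> \<le> C * pa_sqnorm K (w' - w t) (\<lambda>i. \<theta>' i - \<theta> t i)"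
      by (rule mult_right_mono[OF C[OF that(1)] pa_sqnorm_nonneg])
    finally show ?thesis .
  qed
  have "1 + real (K - 1 - (yr T - yl T)) * (norm (x T))^2 \<le> C"
    using C \<open>1 \<le> T\<close> by simp
  moreover have "0 \<le> real (K - 1 - (yr T - yl T)) * (norm (x T))^2"
    by simp
  ultimately have "0 \<le> C"
    by linarith
  have step_le: "L t \<le> C * (E t - E (Suc t))" if "t \<in> {1..<T}" for t
  proof -
    have "L t \<le> C * pa_sqnorm K (w (Suc t) - w t) (\<lambda>i. \<theta> (Suc t) i - \<theta> t i)"
      using loss_le pa[OF that] that unfolding pa_step_def by auto
    also have "\<dots> \<le> C * (E t - E (Suc t))"
      using pa_step_sqnorm_decrease[OF pa[OF that] feas] that \<open>0 \<le> C\<close> unfolding E_def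
      by (intro mult_left_mono) auto
    finally show ?thesis .
  qed
  have "(\<Sum>t=1..T. L t) = (\<Sum>t=1..<T. L t) + L T"
    using \<open>1 \<le> T\<close> by (simp add: sum.last_plus)
  also have "\<dots> \<le> (\<Sum>t=1..<T. C * (E t - E (Suc t))) + C * E T"
    using step_le loss_le[of T u b] feas \<open>1 \<le> T\<close> unfolding E_def by (intro add_mono sum_mono) auto
  also have "\<dots> = C * ((\<Sum>t=1..<T. E t - E (Suc t)) + E T)"
    by (simp add: sum_distrib_left distrib_left)
  also have "(\<Sum>t=1..<T. E t - E (Suc t)) = E 1 - E T"
    using sum_Suc_diff'[OF \<open>1 \<le> T\<close>, of E] unfolding sum_subtractf by linarith
  finally show ?thesis
    unfolding L_def E_def by simp
qed

theorem corollary1: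
  fixes K T :: nat
    and x :: "nat \<Rightarrow> real^'d"
    and yl yr :: "nat \<Rightarrow> nat"
    and w :: "nat \<Rightarrow> real^'d"
    and \<theta> :: "nat \<Rightarrow> nat \<Rightarrow> real"
    and u :: "real^'d"
    and b :: "nat \<Rightarrow> real"
  assumes T_pos: "T \<ge> 1"
    and labels: "\<And>t. t \<in> {1..T} \<Longrightarrow> 1 \<le> yl t \<and> yl t \<le> yr t \<and> yr t \<le> K"
    and w_init: "w 1 = 0"
    and theta_init: "\<theta> 1 = (\<lambda>i. 0)"
    and pa: "\<And>t. t \<in> {1..<T} \<Longrightarrow>
               pa_step K (x t) (yl t) (yr t) (w t) (\<theta> t) (w (Suc t)) (\<theta> (Suc t))"
    and ideal_l: "\<And>t i. t \<in> {1..T} \<Longrightarrow> i \<in> {1..<yl t} \<Longrightarrow> u \<bullet> x t - b i \<ge> 1"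
    and ideal_r: "\<And>t i. t \<in> {1..T} \<Longrightarrow> i \<in> {yr t..K-1} \<Longrightarrow> u \<bullet> x t - b i \<le> -1"
  shows "(\<Sum>t=1..T. \<Sum>i=1..K-1. (pa_loss K (x t) (yl t) (yr t) (w t) (\<theta> t) i)^2)
           \<le> ((norm u)^2 + (\<Sum>i=1..K-1. (b i)^2)) *
             (1 + (Max ((\<lambda>t. (norm (x t))^2) ` {1..T}))
                  * (real K - real (Min ((\<lambda>t. yr t - yl t) ` {1..T})) - 1))"
proof -
  let ?R2 = "Max ((\<lambda>t. (norm (x t))^2) ` {1..T})"
  let ?c = "Min ((\<lambda>t. yr t - yl t) ` {1..T})"
  have feasible: "pa_feasible K (x t) (yl t) (yr t) u b" if "t \<in> {1..T}" for t
    unfolding pa_feasible_def using ideal_l[OF that] ideal_r[OF that] by auto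
  have C_bound: "1 + real (K - 1 - (yr t - yl t)) * (norm (x t))^2 \<le> 1 + ?R2 * (real K - real ?c - 1)"
    if "t \<in> {1..T}" for t
  proof -
    have "(norm (x t))^2 \<le> ?R2" and "?c \<le> yr t - yl t"
      using that by (auto intro: Max_ge Min_le)
    moreover have "real (K - 1 - (yr t - yl t)) \<le> real K - real ?c - 1"
      using labels[OF that] \<open>?c \<le> yr t - yl t\<close> by linarith
    ultimately have "real (K - 1 - (yr t - yl t)) * (norm (x t))^2 \<le> (real K - real ?c - 1) * ?R2"
      by (intro mult_mono) auto
    then show ?thesis
      by (simp add: mult.commute)
  qed
  have "(\<Sum>t=1..T. \<Sum>i=1..K-1. (pa_loss K (x t) (yl t) (yr t) (w t) (\<theta> t) i)^2)
      \<le> (1 + ?R2 * (real K - real ?c - 1)) * pa_sqnorm K (u - w 1) (\<lambda>i. b i - \<theta> 1 i)"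
    by (rule pa_cumulative_sq_loss_le[where yl = yl and yr = yr and x = x and u = u and b = b,
          OF T_pos labels pa feasible C_bound])
  then show ?thesis
    using w_init theta_init by (simp add: pa_sqnorm_def mult.commute)
qed

end
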